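(* A square-grid circle pattern $z$ satisfies $M_b(z)=z$ and $M_w(z)=z$ if and only if it has constant horizontal and vertical intersection angles.
   Context: A square-grid circle pattern is a map $z$ from vertices of $\mathbb{Z}^2$ to $\mathbb{C}$ such that the four corners of each face $(m,n)$ lie on a circle; faces are black if $m+n$ is even, white otherwise. Each vertex lies on two black and two white circles. $M_b$ moves each vertex to the other intersection point of the two white circles through it; $M_w$ moves each vertex to the other intersection point of the two black circles through it. The intersection angle $\theta(e)\in[0,\pi)$ of an edge $e$ is the angle between the circles of the two faces adjacent to $e$. Constant horizontal and vertical intersection angles means there is $\alpha\in[0,\pi/2]$ with $\theta=\alpha$ on all vertical edges and $\theta=\pi-\alpha$ on all horizontal edges.
   Formalization: Constant horizontal and vertical intersection angles means that some alpha, not bound to [0, pi/2], has theta = alpha on all vertical edges and theta = pi - alpha on all horizontal edges. The statement above fails without it. *)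

theory Defs
  imports "HOL-Analysis.Analysis"
begin

type_synonym grid_map = "int \<times> int \<Rightarrow> complex"

definition face_corners :: "grid_map \<Rightarrow> int \<times> int \<Rightarrow> complex list" where
  "face_corners z f = (case f of (m, n) \<Rightarrow>
     [z (m, n), z (m + 1, n), z (m + 1, n + 1), z (m, n + 1)])"

definition black_face :: "int \<times> int \<Rightarrow> bool" where
  "black_face f = even (fst f + snd f)"

definition circle_pattern :: "grid_map \<Rightarrow> bool" where
  "circle_pattern z \<longleftrightarrow>
     (\<forall>f. distinct (face_corners z f) \<and>
          (\<exists>c r. r > 0 \<and> set (face_corners z f) \<subseteq> sphere c r))"

text \<open>Center and circle of a face (unique, since the corners are distinct).\<close>
definition face_center :: "grid_map \<Rightarrow> int \<times> int \<Rightarrow> complex" where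
  "face_center z f = (THE c. \<exists>r > 0. set (face_corners z f) \<subseteq> sphere c r)"

definition face_circle :: "grid_map \<Rightarrow> int \<times> int \<Rightarrow> complex set" where
  "face_circle z f = sphere (face_center z f) (dist (face_center z f) (z f))"

text \<open>The other intersection point of two circles C1, C2 through v (equal to v
  in case of tangency); undefined (None) if C1 \<inter> C2 is not of the form {v, w}.\<close>
definition other_intersection :: "complex set \<Rightarrow> complex set \<Rightarrow> complex \<Rightarrow> complex option" where
  "other_intersection C1 C2 v =
     (if \<exists>w. C1 \<inter> C2 = {v, w} then Some (THE w. C1 \<inter> C2 = {v, w}) else None)"

text \<open>The four faces around vertex (m,n) are (m,n), (m-1,n), (m-1,n-1), (m,n-1);
  (m,n),(m-1,n-1) have one colour, (m-1,n),(m,n-1) the other.\<close>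

text \<open>M_b: move each vertex to the other intersection point of the two white circles through it.\<close>
definition Mb :: "grid_map \<Rightarrow> int \<times> int \<Rightarrow> complex option" where
  "Mb z v = (case v of (m, n) \<Rightarrow>
     (if black_face (m, n)
      then other_intersection (face_circle z (m - 1, n)) (face_circle z (m, n - 1)) (z (m, n))
      else other_intersection (face_circle z (m, n)) (face_circle z (m - 1, n - 1)) (z (m, n))))"

text \<open>M_w: move each vertex to the other intersection point of the two black circles through it.\<close>
definition Mw :: "grid_map \<Rightarrow> int \<times> int \<Rightarrow> complex option" where
  "Mw z v = (case v of (m, n) \<Rightarrow>
     (if black_face (m, n)
      then other_intersection (face_circle z (m, n)) (face_circle z (m - 1, n - 1)) (z (m, n))
      else other_intersection (face_circle z (m - 1, n)) (face_circle z (m, n - 1)) (z (m, n))))"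

definition mod_pi :: "real \<Rightarrow> real" where
  "mod_pi x = x - pi * of_int \<lfloor>x / pi\<rfloor>"

text \<open>Oriented angle in [0,pi) at the point p from the circle with center c1 to the
  circle with center c2 (angle between their tangent lines at p).\<close>
definition circle_angle :: "complex \<Rightarrow> complex \<Rightarrow> complex \<Rightarrow> real" where
  "circle_angle c1 c2 p = mod_pi (Arg ((p - c2) / (p - c1)))"

text \<open>Intersection angle of the vertical edge from (m,n) to (m,n+1): measured at z(m,n),
  from the circle of face (m,n) to the circle of face (m-1,n) (counterclockwise order
  around the vertex (m,n)).\<close>
definition theta_vert :: "grid_map \<Rightarrow> int \<Rightarrow> int \<Rightarrow> real" where
  "theta_vert z m n = circle_angle (face_center z (m, n)) (face_center z (m - 1, n)) (z (m, n))"

text \<open>Intersection angle of the horizontal edge from (m,n) to (m+1,n): measured at z(m,n),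
  from the circle of face (m,n-1) to the circle of face (m,n).\<close>
definition theta_horiz :: "grid_map \<Rightarrow> int \<Rightarrow> int \<Rightarrow> real" where
  "theta_horiz z m n = circle_angle (face_center z (m, n - 1)) (face_center z (m, n)) (z (m, n))"

definition constant_angles :: "grid_map \<Rightarrow> bool" where
  "constant_angles z \<longleftrightarrow>
     (\<exists>\<alpha>. (\<forall>m n. theta_vert z m n = \<alpha>) \<and> (\<forall>m n. theta_horiz z m n = pi - \<alpha>))"

end

theory Submission
  imports Defs
begin

text \<open>Both maps fix \<open>z\<close> exactly when, at every vertex \<open>p\<close>, the two black circles through
  \<open>p\<close> touch there and so do the two white ones; for two circles through \<open>p\<close> this means
  that their centres are collinear with \<open>p\<close>. Every intersection angle at \<open>p\<close> is the argument
  modulo \<open>pi\<close> of a ratio of two consecutive radius vectors \<open>p - c\<^sub>i\<close>, so the two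
  collinearities say precisely that opposite angles at \<open>p\<close> are equal and adjacent ones add up
  to \<open>pi\<close>. An edge has the same intersection angle at both of its endpoints (the second
  intersection point is the mirror image of the first in the line of centres), so these
  local relations propagate over the whole grid.\<close>

lemma mod_pi_bounds: "0 \<le> mod_pi x \<and> mod_pi x < pi"
proof -
  have "pi * of_int \<lfloor>x / pi\<rfloor> \<le> x" "x < pi * (of_int \<lfloor>x / pi\<rfloor> + 1)"
    using floor_divide_lower[of pi x] floor_divide_upper[of pi x] by (simp_all add: mult.commute)
  then show ?thesis
    unfolding mod_pi_def by (simp add: algebra_simps)
qed

definition arg_mod_pi :: "complex \<Rightarrow> real" where
  "arg_mod_pi u = mod_pi (Arg u)"

lemma circle_angle_eq_arg_mod_pi: "circle_angle c1 c2 p = arg_mod_pi ((p - c2) / (p - c1))"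
  unfolding circle_angle_def arg_mod_pi_def ..

lemma arg_mod_pi_bounds: "0 \<le> arg_mod_pi u \<and> arg_mod_pi u < pi"
  unfolding arg_mod_pi_def by (rule mod_pi_bounds)

lemma cis_in_Reals_iff: "cis x \<in> \<real> \<longleftrightarrow> sin x = 0"
  by (simp add: complex_is_Real_iff)

lemma divide_cis_arg_mod_pi_in_Reals: "u / cis (arg_mod_pi u) \<in> \<real>"
proof -
  define k where "k = \<lfloor>Arg u / pi\<rfloor>"
  have "u / cis (arg_mod_pi u) = rcis (cmod u) (Arg u) / cis (Arg u - pi * of_int k)"
    by (simp add: rcis_cmod_Arg arg_mod_pi_def mod_pi_def k_def)
  also have "\<dots> = of_real (cmod u) * cis (of_int k * pi)"
    unfolding rcis_def times_divide_eq_right[symmetric] cis_divide by (simp add: mult.commute)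
  also have "\<dots> \<in> \<real>"
    using sin_times_pi_eq_0[of "of_int k"] by (simp add: complex_is_Real_iff)
  finally show ?thesis .
qed

lemma arg_mod_pi_unique:
  assumes "u \<noteq> 0" "0 \<le> t" "t < pi" "u / cis t \<in> \<real>"
  shows "arg_mod_pi u = t"
proof -
  define a where "a = arg_mod_pi u"
  have "cis (t - a) = (u / cis a) / (u / cis t)"
    using assms(1) by (simp add: cis_divide[symmetric] field_simps)
  also have "\<dots> \<in> \<real>"
    unfolding a_def by (intro Reals_divide divide_cis_arg_mod_pi_in_Reals assms(4))
  finally have "sin (t - a) = 0"
    by (simp add: cis_in_Reals_iff)
  moreover have "\<bar>t - a\<bar> < pi"
    using arg_mod_pi_bounds[of u] assms(2,3) unfolding a_def by auto
  ultimately show ?thesis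
    using sin_zero_pi_iff unfolding a_def by fastforce
qed

lemma arg_mod_pi_eq_iff:
  assumes "u \<noteq> 0" "v \<noteq> 0"
  shows "arg_mod_pi u = arg_mod_pi v \<longleftrightarrow> u / v \<in> \<real>"
proof
  assume eq: "arg_mod_pi u = arg_mod_pi v"
  have "u / v = (u / cis (arg_mod_pi u)) / (v / cis (arg_mod_pi v))"
    by (simp add: eq)
  also have "\<dots> \<in> \<real>"
    by (intro Reals_divide divide_cis_arg_mod_pi_in_Reals)
  finally show "u / v \<in> \<real>" .
next
  assume uv: "u / v \<in> \<real>"
  have "v / cis (arg_mod_pi u) = (u / cis (arg_mod_pi u)) / (u / v)"
    using assms by simp
  also have "\<dots> \<in> \<real>"
    by (intro Reals_divide divide_cis_arg_mod_pi_in_Reals uv)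
  finally show "arg_mod_pi u = arg_mod_pi v"
    using arg_mod_pi_unique[OF assms(2)] arg_mod_pi_bounds[of u] by auto
qed

lemma arg_mod_pi_eq_0_iff: "u \<noteq> 0 \<Longrightarrow> arg_mod_pi u = 0 \<longleftrightarrow> u \<in> \<real>"
  using arg_mod_pi_eq_iff[of u 1] arg_mod_pi_unique[of 1 0] by simp

lemma arg_mod_pi_cnj: "arg_mod_pi (cnj w) = arg_mod_pi (inverse w)"
proof (cases "w = 0")
  case False
  have "cnj w / inverse w = of_real ((Re w)\<^sup>2 + (Im w)\<^sup>2)"
    using complex_mult_cnj[of w] by (simp add: divide_inverse mult.commute)
  then show ?thesis
    using False by (simp add: arg_mod_pi_eq_iff)
qed simp

lemma mult_in_Reals_iff_right: "r \<in> \<real> \<Longrightarrow> r \<noteq> 0 \<Longrightarrow> r * w \<in> \<real> \<longleftrightarrow> w \<in> \<real>"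
  for r w :: complex
  using Reals_divide[of "r * w" r] by auto

lemma arg_mod_pi_add_eq_pi_iff:
  assumes "u \<noteq> 0" "v \<noteq> 0"
  shows "arg_mod_pi u + arg_mod_pi v = pi \<longleftrightarrow> u * v \<in> \<real> \<and> u \<notin> \<real>"
proof -
  define a b where "a = arg_mod_pi u" and "b = arg_mod_pi v"
  have uv: "u * v = (u / cis a) * (v / cis b) * cis (a + b)"
    by (simp add: cis_mult[symmetric] field_simps)
  have "(u / cis a) * (v / cis b) \<in> \<real>"
    unfolding a_def b_def by (intro Reals_mult divide_cis_arg_mod_pi_in_Reals)
  moreover have "(u / cis a) * (v / cis b) \<noteq> 0"
    using assms by simp
  ultimately have "u * v \<in> \<real> \<longleftrightarrow> sin (a + b) = 0"
    using mult_in_Reals_iff_right cis_in_Reals_iff uv by metis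
  moreover have "u \<in> \<real> \<longleftrightarrow> a = 0"
    unfolding a_def using arg_mod_pi_eq_0_iff[OF assms(1)] by simp
  moreover have "a + b = pi \<longleftrightarrow> sin (a + b) = 0 \<and> a \<noteq> 0"
  proof
    assume "sin (a + b) = 0 \<and> a \<noteq> 0"
    moreover have "\<bar>a + b - pi\<bar> < pi"
      using calculation arg_mod_pi_bounds[of u] arg_mod_pi_bounds[of v] unfolding a_def b_def by auto
    ultimately show "a + b = pi"
      using sin_zero_pi_iff[of "a + b - pi"] by (simp add: sin_diff)
  qed (use arg_mod_pi_bounds[of v] in \<open>auto simp: b_def\<close>)
  ultimately show ?thesis
    unfolding a_def b_def by blast
qed

lemma divide_in_Reals_iff_Im: "x / y \<in> \<real> \<longleftrightarrow> Im (x * cnj y) = 0"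
  for x y :: complex
proof (cases "y = 0")
  case False
  then have "x / y = x * cnj y / of_real ((cmod y)\<^sup>2)"
    by (simp add: complex_div_cnj[of x y])
  then show ?thesis
    using False by (simp add: complex_is_Real_iff)
qed (simp add: complex_is_Real_iff)

definition line_reflect :: "complex \<Rightarrow> complex \<Rightarrow> complex \<Rightarrow> complex" where
  "line_reflect a b x = a + cnj (x - a) * (b - a) / cnj (b - a)"

lemma line_reflect_eq_self_iff:
  assumes "a \<noteq> b"
  shows "line_reflect a b x = x \<longleftrightarrow> (x - a) / (b - a) \<in> \<real>"
proof -
  have "line_reflect a b x = x \<longleftrightarrow> cnj ((x - a) * cnj (b - a)) = (x - a) * cnj (b - a)"
    using assms unfolding line_reflect_def by (auto simp: field_simps)
  also have "\<dots> \<longleftrightarrow> (x - a) * cnj (b - a) \<in> \<real>"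
    by (rule Reals_cnj_iff[symmetric])
  also have "\<dots> \<longleftrightarrow> (x - a) / (b - a) \<in> \<real>"
    by (subst divide_in_Reals_iff_Im) (rule complex_is_Real_iff)
  finally show ?thesis .
qed

lemma line_reflect_sub_left: "line_reflect a b x - a = cnj (x - a) * (b - a) / cnj (b - a)"
  unfolding line_reflect_def by simp

lemma line_reflect_sub_right: "a \<noteq> b \<Longrightarrow> line_reflect a b x - b = cnj (x - b) * (b - a) / cnj (b - a)"
  unfolding line_reflect_def by (simp add: field_simps)

lemma line_reflect_ratio:
  assumes "a \<noteq> b"
  shows "(line_reflect a b x - b) / (line_reflect a b x - a) = cnj ((x - b) / (x - a))"
  using assms unfolding line_reflect_sub_left line_reflect_sub_right[OF assms] by simp

lemma mem_sphere_dist_iff: "y \<in> sphere a (dist a x) \<longleftrightarrow> cmod (y - a) = cmod (x - a)"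
  by (simp add: dist_norm norm_minus_commute)

lemma eq_or_eq_cnj_if_norms_eq:
  assumes "cmod w = cmod w0" "cmod (w - 1) = cmod (w0 - 1)"
  shows "w = w0 \<or> w = cnj w0"
proof -
  have "(cmod w)\<^sup>2 = (cmod w0)\<^sup>2" "(cmod (w - 1))\<^sup>2 = (cmod (w0 - 1))\<^sup>2"
    using assms by simp_all
  then have "(Re w)\<^sup>2 + (Im w)\<^sup>2 = (Re w0)\<^sup>2 + (Im w0)\<^sup>2"
    "(Re w - 1)\<^sup>2 + (Im w)\<^sup>2 = (Re w0 - 1)\<^sup>2 + (Im w0)\<^sup>2"
    by (simp_all add: cmod_power2)
  then have "Re w = Re w0" "(Im w)\<^sup>2 = (Im w0)\<^sup>2"
    by (simp_all add: power2_eq_square algebra_simps)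
  then show ?thesis
    by (auto simp: complex_eq_iff power2_eq_iff)
qed

lemma sphere_inter_sphere:
  assumes "a \<noteq> b"
  shows "sphere a (dist a x) \<inter> sphere b (dist b x) = {x, line_reflect a b x}"
proof (intro equalityI subsetI)
  fix y
  assume "y \<in> sphere a (dist a x) \<inter> sphere b (dist b x)"
  then have "cmod (y - a) = cmod (x - a)" "cmod (y - b) = cmod (x - b)"
    by (simp_all del: mem_sphere add: mem_sphere_dist_iff)
  moreover have "(z - a) / (b - a) - 1 = (z - b) / (b - a)" for z
    using assms by (simp add: field_simps)
  ultimately have "cmod ((y - a) / (b - a)) = cmod ((x - a) / (b - a))"
    "cmod ((y - a) / (b - a) - 1) = cmod ((x - a) / (b - a) - 1)"
    by (simp_all add: norm_divide)
  from eq_or_eq_cnj_if_norms_eq[OF this] show "y \<in> {x, line_reflect a b x}"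
    using assms by (auto simp: line_reflect_def field_simps)
next
  fix y
  assume "y \<in> {x, line_reflect a b x}"
  moreover have "cmod (line_reflect a b x - a) = cmod (x - a)" "cmod (line_reflect a b x - b) = cmod (x - b)"
    using assms unfolding line_reflect_sub_left line_reflect_sub_right[OF assms]
    by (simp_all only: norm_mult norm_divide complex_mod_cnj) simp_all
  ultimately show "y \<in> sphere a (dist a x) \<inter> sphere b (dist b x)"
    by (auto simp del: mem_sphere simp: mem_sphere_dist_iff)
qed

lemma sphere_inter_sphere_eq_singleton_iff:
  fixes p a b :: complex
  assumes "p \<noteq> a" "p \<noteq> b"
  shows "sphere a (dist a p) \<inter> sphere b (dist b p) = {p} \<longleftrightarrow> a \<noteq> b \<and> (p - a) / (p - b) \<in> \<real>"
proof (cases "a = b")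
  case True
  have "cmod ((2 * a - p) - a) = cmod (p - a)"
    by (metis minus_diff_eq norm_minus_cancel mult_2 add_diff_cancel_left diff_diff_eq2)
  then have "2 * a - p \<in> sphere a (dist a p)"
    by (simp only: mem_sphere_dist_iff)
  moreover have "2 * a - p \<noteq> p"
    using assms(1) by (simp add: algebra_simps)
  ultimately show ?thesis
    using True by blast
next
  case False
  have "Im ((p - a) * cnj (p - b)) = - Im ((p - a) * cnj (b - a))"
    by (simp add: algebra_simps)
  then have "(p - a) / (p - b) \<in> \<real> \<longleftrightarrow> (p - a) / (b - a) \<in> \<real>"
    by (simp only: divide_in_Reals_iff_Im neg_equal_0_iff_equal)
  also have "\<dots> \<longleftrightarrow> {p, line_reflect a b p} = {p}"
    using line_reflect_eq_self_iff[OF False] by auto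
  finally show ?thesis
    unfolding sphere_inter_sphere[OF False] using False by blast
qed

lemma center_eq_if_three_common_points:
  fixes c c' :: complex
  assumes "distinct [x1, x2, x3]"
    and "{x2, x3} \<subseteq> sphere c (dist c x1) \<inter> sphere c' (dist c' x1)"
  shows "c = c'"
proof (rule ccontr)
  assume "c \<noteq> c'"
  then have "{x2, x3} \<subseteq> {x1, line_reflect c c' x1}"
    using assms(2) by (simp add: sphere_inter_sphere)
  with assms(1) show False
    by auto
qed

lemma center_eq_if_parallel_radii:
  fixes p a b :: complex
  assumes "q \<noteq> p" "p \<noteq> a" "p \<noteq> b" "q \<in> sphere a (dist a p) \<inter> sphere b (dist b p)"
    and "(p - a) / (p - b) \<in> \<real>"
  shows "a = b"
  using assms sphere_inter_sphere_eq_singleton_iff[OF assms(2,3)] by blast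

lemma circle_angle_other_intersection:
  assumes "q \<noteq> p" "p \<noteq> a" "p \<noteq> b" "q \<in> sphere a (dist a p) \<inter> sphere b (dist b p)"
  shows "circle_angle a b q = circle_angle b a p"
proof (cases "a = b")
  case True
  then have "q \<noteq> a"
    using assms(3,4) by auto
  then show ?thesis
    using True assms(2) by (simp add: circle_angle_eq_arg_mod_pi)
next
  case False
  then have "q = line_reflect a b p"
    using assms(1,4) by (simp add: sphere_inter_sphere)
  then have "(q - b) / (q - a) = cnj (inverse ((p - a) / (p - b)))"
    using False by (simp add: line_reflect_ratio)
  then show ?thesis
    by (simp only: circle_angle_eq_arg_mod_pi arg_mod_pi_cnj inverse_inverse_eq)
qed

text \<open>In the next three lemmas \<open>c\<^sub>1, c\<^sub>2, c\<^sub>3, c\<^sub>4\<close> are the centres of the four circles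
  through the vertex \<open>p\<close>, in counterclockwise order. Consecutive circles meet again at the
  other end of their common edge, which is where the hypotheses that exclude their tangency
  at \<open>p\<close> come from.\<close>

lemma vertex_angles_if_tangent:
  fixes p c1 c2 c3 c4 :: complex
  assumes "p \<noteq> c1" "p \<noteq> c2" "p \<noteq> c3" "p \<noteq> c4"
    and parallel12: "(p - c1) / (p - c2) \<in> \<real> \<Longrightarrow> c1 = c2"
    and parallel14: "(p - c1) / (p - c4) \<in> \<real> \<Longrightarrow> c1 = c4"
    and "c2 \<noteq> c4" "(p - c1) / (p - c3) \<in> \<real>" "(p - c2) / (p - c4) \<in> \<real>"
  shows "circle_angle c3 c4 p = circle_angle c1 c2 p"
    and "circle_angle c2 c3 p = circle_angle c4 c1 p"
    and "circle_angle c1 c2 p + circle_angle c4 c1 p = pi"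
proof -
  define x1 x2 x3 x4 where "x1 = p - c1" and "x2 = p - c2" and "x3 = p - c3" and "x4 = p - c4"
  have nz: "x1 \<noteq> 0" "x2 \<noteq> 0" "x3 \<noteq> 0" "x4 \<noteq> 0"
    using assms(1-4) unfolding x1_def x2_def x3_def x4_def by simp_all
  have real13: "x1 / x3 \<in> \<real>" "x3 / x1 \<in> \<real>" and real24: "x2 / x4 \<in> \<real>" "x4 / x2 \<in> \<real>"
    using assms(8,9) Reals_inverse_iff[of "x1 / x3"] Reals_inverse_iff[of "x2 / x4"]
    unfolding x1_def x2_def x3_def x4_def by simp_all
  have "(x4 / x3) / (x2 / x1) = (x4 / x2) * (x1 / x3)"
    using nz by (simp add: field_simps)
  also have "\<dots> \<in> \<real>"
    using real24(2) real13(1) by (rule Reals_mult)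
  finally have "(x4 / x3) / (x2 / x1) \<in> \<real>" .
  then have "arg_mod_pi (x4 / x3) = arg_mod_pi (x2 / x1)"
    using nz by (subst arg_mod_pi_eq_iff) simp_all
  then show "circle_angle c3 c4 p = circle_angle c1 c2 p"
    by (simp add: circle_angle_eq_arg_mod_pi x1_def x2_def x3_def x4_def)
  have "(x3 / x2) / (x1 / x4) = (x3 / x1) * (x4 / x2)"
    using nz by (simp add: field_simps)
  also have "\<dots> \<in> \<real>"
    using real13(2) real24(2) by (rule Reals_mult)
  finally have "(x3 / x2) / (x1 / x4) \<in> \<real>" .
  then have "arg_mod_pi (x3 / x2) = arg_mod_pi (x1 / x4)"
    using nz by (subst arg_mod_pi_eq_iff) simp_all
  then show "circle_angle c2 c3 p = circle_angle c4 c1 p"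
    by (simp add: circle_angle_eq_arg_mod_pi x1_def x2_def x3_def x4_def)
  have "x2 / x1 \<notin> \<real>"
  proof
    assume "x2 / x1 \<in> \<real>"
    then have "c1 = c2"
      using parallel12 Reals_inverse_iff[of "x2 / x1"] by (simp add: x1_def x2_def)
    moreover from this have "c1 = c4"
      using parallel14 real24(1) by (simp add: x2_def x4_def)
    ultimately show False
      using \<open>c2 \<noteq> c4\<close> by simp
  qed
  moreover have "(x2 / x1) * (x1 / x4) = x2 / x4"
    using nz by simp
  ultimately have "arg_mod_pi (x2 / x1) + arg_mod_pi (x1 / x4) = pi"
    using nz real24 by (subst arg_mod_pi_add_eq_pi_iff) simp_all
  then show "circle_angle c1 c2 p + circle_angle c4 c1 p = pi"
    by (simp add: circle_angle_eq_arg_mod_pi x1_def x2_def x4_def)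
qed

lemma tangent_if_vertex_angles:
  fixes p c1 c2 c3 c4 :: complex
  assumes "p \<noteq> c1" "p \<noteq> c2" "p \<noteq> c3" "p \<noteq> c4"
    and "c1 = c3 \<Longrightarrow> c1 = c2" "c2 = c4 \<Longrightarrow> c1 = c2"
    and opposite: "circle_angle c3 c4 p = circle_angle c1 c2 p"
    and adjacent: "circle_angle c1 c2 p + circle_angle c4 c1 p = pi"
  shows "c1 \<noteq> c3" "(p - c1) / (p - c3) \<in> \<real>" "c2 \<noteq> c4" "(p - c2) / (p - c4) \<in> \<real>"
proof -
  define x1 x2 x3 x4 where "x1 = p - c1" and "x2 = p - c2" and "x3 = p - c3" and "x4 = p - c4"
  have nz: "x1 \<noteq> 0" "x2 \<noteq> 0" "x3 \<noteq> 0" "x4 \<noteq> 0"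
    using assms(1-4) unfolding x1_def x2_def x3_def x4_def by simp_all
  have "arg_mod_pi (x2 / x1) + arg_mod_pi (x1 / x4) = pi"
    using adjacent by (simp add: circle_angle_eq_arg_mod_pi x1_def x2_def x4_def)
  then have "(x2 / x1) * (x1 / x4) \<in> \<real>" and "arg_mod_pi (x2 / x1) \<noteq> 0"
    using nz arg_mod_pi_add_eq_pi_iff[of "x2 / x1" "x1 / x4"] arg_mod_pi_bounds[of "x1 / x4"] by auto
  then have real24: "x2 / x4 \<in> \<real>" and "c1 \<noteq> c2"
    using nz(1) arg_mod_pi_eq_0_iff[of 1] by (auto simp: x1_def x2_def)
  then show "c1 \<noteq> c3" "c2 \<noteq> c4" "(p - c2) / (p - c4) \<in> \<real>"
    using assms(5,6) by (auto simp: x2_def x4_def)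
  have "arg_mod_pi (x4 / x3) = arg_mod_pi (x2 / x1)"
    using opposite by (simp add: circle_angle_eq_arg_mod_pi x1_def x2_def x3_def x4_def)
  then have "(x4 / x3) / (x2 / x1) \<in> \<real>"
    using nz by (subst (asm) arg_mod_pi_eq_iff) simp_all
  moreover have "x1 / x3 = ((x4 / x3) / (x2 / x1)) * (x2 / x4)"
    using nz by (simp add: field_simps)
  ultimately show "(p - c1) / (p - c3) \<in> \<real>"
    using real24 Reals_mult unfolding x1_def x3_def by metis
qed

lemma vertex_tangencies_iff_angles:
  fixes p c1 c2 c3 c4 :: complex
  assumes "p \<noteq> c1" "p \<noteq> c2" "p \<noteq> c3" "p \<noteq> c4"
    and "(p - c1) / (p - c2) \<in> \<real> \<Longrightarrow> c1 = c2" "(p - c1) / (p - c4) \<in> \<real> \<Longrightarrow> c1 = c4"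
    and "c1 = c3 \<Longrightarrow> c1 = c2" "c2 = c4 \<Longrightarrow> c1 = c2"
  shows "(c1 \<noteq> c3 \<and> (p - c1) / (p - c3) \<in> \<real>) \<and> (c2 \<noteq> c4 \<and> (p - c2) / (p - c4) \<in> \<real>) \<longleftrightarrow>
    (\<exists>\<alpha>. circle_angle c1 c2 p = \<alpha> \<and> circle_angle c3 c4 p = \<alpha> \<and>
         circle_angle c2 c3 p = pi - \<alpha> \<and> circle_angle c4 c1 p = pi - \<alpha>)"
proof
  assume "(c1 \<noteq> c3 \<and> (p - c1) / (p - c3) \<in> \<real>) \<and> (c2 \<noteq> c4 \<and> (p - c2) / (p - c4) \<in> \<real>)"
  with vertex_angles_if_tangent[OF assms(1-6)] show "\<exists>\<alpha>. circle_angle c1 c2 p = \<alpha> \<and>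
      circle_angle c3 c4 p = \<alpha> \<and> circle_angle c2 c3 p = pi - \<alpha> \<and> circle_angle c4 c1 p = pi - \<alpha>"
    by force
next
  assume "\<exists>\<alpha>. circle_angle c1 c2 p = \<alpha> \<and> circle_angle c3 c4 p = \<alpha> \<and>
      circle_angle c2 c3 p = pi - \<alpha> \<and> circle_angle c4 c1 p = pi - \<alpha>"
  with tangent_if_vertex_angles[OF assms(1-4,7,8)]
  show "(c1 \<noteq> c3 \<and> (p - c1) / (p - c3) \<in> \<real>) \<and> (c2 \<noteq> c4 \<and> (p - c2) / (p - c4) \<in> \<real>)"
    by force
qed

lemma corners_around_vertex:
  "z (m, n) \<in> set (face_corners z (m, n))" "z (m, n) \<in> set (face_corners z (m - 1, n))"
  "z (m, n) \<in> set (face_corners z (m - 1, n - 1))" "z (m, n) \<in> set (face_corners z (m, n - 1))"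
  "z (m, n + 1) \<in> set (face_corners z (m, n))" "z (m, n + 1) \<in> set (face_corners z (m - 1, n))"
  "z (m - 1, n) \<in> set (face_corners z (m - 1, n))" "z (m - 1, n) \<in> set (face_corners z (m - 1, n - 1))"
  "z (m, n - 1) \<in> set (face_corners z (m - 1, n - 1))" "z (m, n - 1) \<in> set (face_corners z (m, n - 1))"
  "z (m + 1, n) \<in> set (face_corners z (m, n - 1))" "z (m + 1, n) \<in> set (face_corners z (m, n))"
  by (simp_all add: face_corners_def)

context
  fixes z :: grid_map
  assumes pattern: "circle_pattern z"
begin

lemma face_corners_on_sphere: "\<exists>r>0. set (face_corners z f) \<subseteq> sphere (face_center z f) r"
proof -
  obtain c r where cr: "r > 0" "set (face_corners z f) \<subseteq> sphere c r"
    using pattern unfolding circle_pattern_def by blast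
  obtain m n where f: "f = (m, n)"
    by fastforce
  have distinct: "distinct [z (m, n), z (m + 1, n), z (m + 1, n + 1)]"
    using pattern unfolding circle_pattern_def f face_corners_def by force
  have "c' = c" if "\<exists>r'>0. set (face_corners z f) \<subseteq> sphere c' r'" for c'
  proof (rule center_eq_if_three_common_points[OF distinct])
    from that obtain r' where "set (face_corners z f) \<subseteq> sphere c' r'"
      by blast
    with cr show "{z (m + 1, n), z (m + 1, n + 1)} \<subseteq>
        sphere c' (dist c' (z (m, n))) \<inter> sphere c (dist c (z (m, n)))"
      unfolding f face_corners_def by auto
  qed
  then have "face_center z f = c"
    unfolding face_center_def using cr by (intro the_equality) auto
  with cr show ?thesis
    by blast
qed

lemma corner_ne_face_center: "x \<in> set (face_corners z f) \<Longrightarrow> x \<noteq> face_center z f"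
  using face_corners_on_sphere[of f] by auto

lemma face_circle_eq_sphere_corner:
  assumes "x \<in> set (face_corners z f)"
  shows "face_circle z f = sphere (face_center z f) (dist (face_center z f) x)"
proof -
  obtain r where "set (face_corners z f) \<subseteq> sphere (face_center z f) r"
    using face_corners_on_sphere by blast
  moreover have "z f \<in> set (face_corners z f)"
    by (cases f) (simp add: face_corners_def)
  ultimately have "dist (face_center z f) (z f) = dist (face_center z f) x"
    using assms by (metis mem_sphere subsetD)
  then show ?thesis
    unfolding face_circle_def by simp
qed

lemma corner_mem_face_circle: "x \<in> set (face_corners z f) \<Longrightarrow> x \<in> face_circle z f"
  unfolding face_circle_eq_sphere_corner[of x] by simp

lemma face_circles_tangent_iff:
  assumes "p \<in> set (face_corners z f)" "p \<in> set (face_corners z g)"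
  shows "face_circle z f \<inter> face_circle z g = {p} \<longleftrightarrow>
    face_center z f \<noteq> face_center z g \<and> (p - face_center z f) / (p - face_center z g) \<in> \<real>"
  unfolding face_circle_eq_sphere_corner[OF assms(1)] face_circle_eq_sphere_corner[OF assms(2)]
  using assms by (intro sphere_inter_sphere_eq_singleton_iff corner_ne_face_center)

lemma common_corner_mem_spheres:
  assumes "p \<in> set (face_corners z f)" "p \<in> set (face_corners z g)"
    and "q \<in> set (face_corners z f)" "q \<in> set (face_corners z g)"
  shows "q \<in> sphere (face_center z f) (dist (face_center z f) p) \<inter>
    sphere (face_center z g) (dist (face_center z g) p)"
  using corner_mem_face_circle[OF assms(3)] corner_mem_face_circle[OF assms(4)]
  unfolding face_circle_eq_sphere_corner[OF assms(1)] face_circle_eq_sphere_corner[OF assms(2)] by blast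

lemma face_centers_eq_if_parallel_radii:
  assumes "p \<in> set (face_corners z f)" "p \<in> set (face_corners z g)"
    and "q \<in> set (face_corners z f)" "q \<in> set (face_corners z g)" "q \<noteq> p"
    and "(p - face_center z f) / (p - face_center z g) \<in> \<real>"
  shows "face_center z f = face_center z g"
  using assms(5) corner_ne_face_center[OF assms(1)] corner_ne_face_center[OF assms(2)]
    common_corner_mem_spheres[OF assms(1-4)] assms(6)
  by (rule center_eq_if_parallel_radii)

lemma circle_angle_across_edge:
  assumes "p \<in> set (face_corners z f)" "p \<in> set (face_corners z g)"
    and "q \<in> set (face_corners z f)" "q \<in> set (face_corners z g)" "q \<noteq> p"
  shows "circle_angle (face_center z f) (face_center z g) q =
    circle_angle (face_center z g) (face_center z f) p"
  using assms(5) corner_ne_face_center[OF assms(1)] corner_ne_face_center[OF assms(2)]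
    common_corner_mem_spheres[OF assms(1-4)]
  by (rule circle_angle_other_intersection)

lemma face_centers_eq_across_vertex:
  assumes "p \<in> set (face_corners z f)" "p \<in> set (face_corners z g)" "p \<in> set (face_corners z h)"
    and "u \<in> set (face_corners z f)" "u \<in> set (face_corners z h)"
    and "v \<in> set (face_corners z g)" "v \<in> set (face_corners z h)"
    and "distinct [p, u, v]" "face_center z f = face_center z g"
  shows "face_center z f = face_center z h"
proof (rule center_eq_if_three_common_points[OF assms(8)])
  have "face_circle z g = face_circle z f"
    unfolding face_circle_eq_sphere_corner[OF assms(1)] face_circle_eq_sphere_corner[OF assms(2)]
      assms(9) ..
  then have "{u, v} \<subseteq> face_circle z f \<inter> face_circle z h"
    using assms(4-7) corner_mem_face_circle by blast
  then show "{u, v} \<subseteq> sphere (face_center z f) (dist (face_center z f) p) \<inter>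
      sphere (face_center z h) (dist (face_center z h) p)"
    unfolding face_circle_eq_sphere_corner[OF assms(1)] face_circle_eq_sphere_corner[OF assms(3)] .
qed

lemma distinct_vertex_neighbours:
  "distinct [z (m, n), z (m, n + 1), z (m + 1, n)]" "distinct [z (m, n), z (m, n + 1), z (m - 1, n)]"
  "z (m, n - 1) \<noteq> z (m, n)"
proof -
  have "distinct (face_corners z f)" for f
    using pattern unfolding circle_pattern_def by blast
  from this[of "(m, n)"] this[of "(m - 1, n)"] this[of "(m, n - 1)"] show
    "distinct [z (m, n), z (m, n + 1), z (m + 1, n)]" "distinct [z (m, n), z (m, n + 1), z (m - 1, n)]"
    "z (m, n - 1) \<noteq> z (m, n)"
    by (auto simp: face_corners_def)
qed

lemma theta_at_far_endpoint:
  "theta_vert z m (n - 1) =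
    circle_angle (face_center z (m - 1, n - 1)) (face_center z (m, n - 1)) (z (m, n))"
  "theta_horiz z (m - 1) n =
    circle_angle (face_center z (m - 1, n)) (face_center z (m - 1, n - 1)) (z (m, n))"
  unfolding theta_vert_def theta_horiz_def
  by (rule circle_angle_across_edge[OF corners_around_vertex(4,3,10,9) distinct_vertex_neighbours(3)],
    rule circle_angle_across_edge[OF corners_around_vertex(3,2,8,7)])
    (use distinct_vertex_neighbours(2)[of m n] in auto)

lemma vertex_tangencies_iff_edge_angles:
  "(face_circle z (m, n) \<inter> face_circle z (m - 1, n - 1) = {z (m, n)} \<and>
    face_circle z (m - 1, n) \<inter> face_circle z (m, n - 1) = {z (m, n)}) \<longleftrightarrow>
   (\<exists>\<alpha>. theta_vert z m n = \<alpha> \<and> theta_vert z m (n - 1) = \<alpha> \<and>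
        theta_horiz z (m - 1) n = pi - \<alpha> \<and> theta_horiz z m n = pi - \<alpha>)"
proof -
  define c1 c2 c3 c4 where "c1 = face_center z (m, n)" and "c2 = face_center z (m - 1, n)"
    and "c3 = face_center z (m - 1, n - 1)" and "c4 = face_center z (m, n - 1)"
  note corners = corners_around_vertex[of z m n]
  note distinct = distinct_vertex_neighbours[of m n]
  have "(c1 \<noteq> c3 \<and> (z (m, n) - c1) / (z (m, n) - c3) \<in> \<real>) \<and>
      (c2 \<noteq> c4 \<and> (z (m, n) - c2) / (z (m, n) - c4) \<in> \<real>) \<longleftrightarrow>
    (\<exists>\<alpha>. circle_angle c1 c2 (z (m, n)) = \<alpha> \<and> circle_angle c3 c4 (z (m, n)) = \<alpha> \<and>
         circle_angle c2 c3 (z (m, n)) = pi - \<alpha> \<and> circle_angle c4 c1 (z (m, n)) = pi - \<alpha>)"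
    unfolding c1_def c2_def c3_def c4_def
  proof (rule vertex_tangencies_iff_angles)
    show "z (m, n) \<noteq> face_center z (m, n)" "z (m, n) \<noteq> face_center z (m - 1, n)"
      "z (m, n) \<noteq> face_center z (m - 1, n - 1)" "z (m, n) \<noteq> face_center z (m, n - 1)"
      using corners(1-4) by (simp_all add: corner_ne_face_center)
    show "face_center z (m, n) = face_center z (m - 1, n)"
      if "(z (m, n) - face_center z (m, n)) / (z (m, n) - face_center z (m - 1, n)) \<in> \<real>"
      using that corners distinct(2) by (intro face_centers_eq_if_parallel_radii[of _ _ _ "z (m, n + 1)"]) auto
    show "face_center z (m, n) = face_center z (m, n - 1)"
      if "(z (m, n) - face_center z (m, n)) / (z (m, n) - face_center z (m, n - 1)) \<in> \<real>"
      using that corners distinct(1) by (intro face_centers_eq_if_parallel_radii[of _ _ _ "z (m + 1, n)"]) auto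
    show "face_center z (m, n) = face_center z (m - 1, n)"
      if "face_center z (m, n) = face_center z (m - 1, n - 1)"
      using corners(1,3,2,5,6,8,7) distinct(2) that by (rule face_centers_eq_across_vertex)
    show "face_center z (m, n) = face_center z (m - 1, n)"
      if "face_center z (m - 1, n) = face_center z (m, n - 1)"
      using face_centers_eq_across_vertex[OF corners(2,4,1,6,5,11,12) distinct(1) that] by simp
  qed
  then show ?thesis
    using corners(1-4) unfolding c1_def c2_def c3_def c4_def theta_at_far_endpoint
    by (simp add: face_circles_tangent_iff theta_vert_def theta_horiz_def)
qed

end

lemma other_intersection_eq_self_iff: "other_intersection C1 C2 v = Some v \<longleftrightarrow> C1 \<inter> C2 = {v}"
proof (cases "\<exists>w. C1 \<inter> C2 = {v, w}")
  case True
  then obtain w where w: "C1 \<inter> C2 = {v, w}"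
    by blast
  then have "(THE w. C1 \<inter> C2 = {v, w}) = w"
    using w by (intro the_equality) (auto simp: doubleton_eq_iff)
  with True w show ?thesis
    unfolding other_intersection_def by auto
next
  case False
  then have "C1 \<inter> C2 \<noteq> {v}"
    by (metis insert_absorb2)
  with False show ?thesis
    unfolding other_intersection_def by simp
qed

text \<open>At a black vertex \<open>M\<^sub>b\<close> uses the circles of the faces \<open>(m - 1, n)\<close>, \<open>(m, n - 1)\<close> and
  \<open>M\<^sub>w\<close> those of \<open>(m, n)\<close>, \<open>(m - 1, n - 1)\<close>; at a white vertex the roles are swapped, so
  together the two maps test both pairs at every vertex.\<close>

lemma Mb_Mw_fixed_iff_tangent:
  "(Mb z = Some \<circ> z \<and> Mw z = Some \<circ> z) \<longleftrightarrow>
   (\<forall>m n. face_circle z (m, n) \<inter> face_circle z (m - 1, n - 1) = {z (m, n)} \<and>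
          face_circle z (m - 1, n) \<inter> face_circle z (m, n - 1) = {z (m, n)})"
proof -
  have "(Mb z = Some \<circ> z \<and> Mw z = Some \<circ> z) \<longleftrightarrow>
      (\<forall>m n. Mb z (m, n) = Some (z (m, n)) \<and> Mw z (m, n) = Some (z (m, n)))"
    by (auto simp: fun_eq_iff)
  moreover have "Mb z (m, n) = Some (z (m, n)) \<and> Mw z (m, n) = Some (z (m, n)) \<longleftrightarrow>
      face_circle z (m, n) \<inter> face_circle z (m - 1, n - 1) = {z (m, n)} \<and>
      face_circle z (m - 1, n) \<inter> face_circle z (m, n - 1) = {z (m, n)}" for m n
    by (cases "black_face (m, n)")
      (simp_all only: Mb_def Mw_def other_intersection_eq_self_iff case_prod_conv if_True if_False
        conj_commute)
  ultimately show ?thesis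
    by blast
qed

lemma int_fun_eq_at_0_if_shift_invariant:
  fixes f :: "int \<Rightarrow> 'a"
  assumes "\<And>n. f n = f (n - 1)"
  shows "f n = f 0"
proof (induction n rule: int_induct[where k = 0])
  case (step1 i)
  then show ?case
    using assms[of "i + 1"] by simp
next
  case (step2 i)
  then show ?case
    using assms[of i] by simp
qed simp

lemma constant_iff_locally_constant:
  fixes V H :: "int \<Rightarrow> int \<Rightarrow> real"
  shows "(\<exists>\<alpha>. (\<forall>m n. V m n = \<alpha>) \<and> (\<forall>m n. H m n = s - \<alpha>)) \<longleftrightarrow>
    (\<forall>m n. \<exists>\<alpha>. V m n = \<alpha> \<and> V m (n - 1) = \<alpha> \<and> H (m - 1) n = s - \<alpha> \<and> H m n = s - \<alpha>)"
    (is "_ \<longleftrightarrow> (\<forall>m n. ?local m n)")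
proof
  assume local: "\<forall>m n. ?local m n"
  have step: "V m n = V m (n - 1)" "H m n = H (m - 1) n" and sum: "V m n = s - H m n" for m n
  proof -
    obtain \<alpha> where "V m n = \<alpha>" "V m (n - 1) = \<alpha>" "H (m - 1) n = s - \<alpha>" "H m n = s - \<alpha>"
      using local by blast
    then show "V m n = V m (n - 1)" "H m n = H (m - 1) n" "V m n = s - H m n"
      by simp_all
  qed
  have V: "V m n = V m 0" for m n
    using step(1) by (rule int_fun_eq_at_0_if_shift_invariant)
  have H: "H m n = H 0 n" for m n
    using step(2) by (rule int_fun_eq_at_0_if_shift_invariant[of "\<lambda>m. H m n"])
  have const: "V m n = V 0 0" for m n
    using sum[of m n] sum[of 0 n] H[of m n] V[of 0 n] by simp
  show "\<exists>\<alpha>. (\<forall>m n. V m n = \<alpha>) \<and> (\<forall>m n. H m n = s - \<alpha>)"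
  proof (intro exI conjI allI)
    show "V m n = V 0 0" "H m n = s - V 0 0" for m n
      using const[of m n] sum[of m n] by simp_all
  qed
qed auto

theorem mainTheorem17:
  fixes z :: "int \<times> int \<Rightarrow> complex"
  assumes "circle_pattern z"
  shows "(Mb z = Some \<circ> z \<and> Mw z = Some \<circ> z) \<longleftrightarrow> constant_angles z"
proof -
  have "(Mb z = Some \<circ> z \<and> Mw z = Some \<circ> z) \<longleftrightarrow>
      (\<forall>m n. face_circle z (m, n) \<inter> face_circle z (m - 1, n - 1) = {z (m, n)} \<and>
             face_circle z (m - 1, n) \<inter> face_circle z (m, n - 1) = {z (m, n)})"
    by (rule Mb_Mw_fixed_iff_tangent)
  also have "\<dots> \<longleftrightarrow> (\<forall>m n. \<exists>\<alpha>. theta_vert z m n = \<alpha> \<and> theta_vert z m (n - 1) = \<alpha> \<and>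
      theta_horiz z (m - 1) n = pi - \<alpha> \<and> theta_horiz z m n = pi - \<alpha>)"
    using vertex_tangencies_iff_edge_angles[OF assms] by simp
  also have "\<dots> \<longleftrightarrow> constant_angles z"
    unfolding constant_angles_def by (rule constant_iff_locally_constant[symmetric])
  finally show ?thesis .
qed

end
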